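(* Let $\mathcal{X}=[-1,1]^2$ with $\boldsymbol{\mu}$ the uniform probability distribution on $\mathcal{X}$. For $\epsilon\in(0,1)$ let $A=[-1,-\epsilon]\times[-1,1]$, $B=[-\epsilon,\epsilon]\times[-1,1]$, $C=[\epsilon,1]\times[-1,1]$, so that $\mathcal{P}=\{A,B,C\}$ is a partition of $\mathcal{X}$ (up to boundaries of measure zero). For $\omega>0$ define $f:\mathcal{X}\to\mathbb{R}$ by $$ f(\mathbf{x})=\begin{cases} x_1+\epsilon, & \mathbf{x}\in A,\\ x_1(x_1+\epsilon)(x_1-\epsilon)\cos(\omega x_2), & \mathbf{x}\in B,\\ x_1-\epsilon, & \mathbf{x}\in C,\end{cases}$$ and take the local reduced dimension map $r(A)=r(B)=r(C)=1$. Then there exist $\epsilon>0$ and $\omega>0$ such that $$\mathbb{E}_{\boldsymbol{\mu}}\big[\|f-R_{AS}(r,f,\boldsymbol{\mu})\|^2\big]\;\geq\;\mathbb{E}_{\boldsymbol{\mu}}\big[\|f-\mathbb{E}_{\boldsymbol{\mu}}[f\mid P_{1,\mathcal{X}}]\|^2\big],$$ where $R_{AS}(r,f,\boldsymbol{\mu})$ is the local ridge approximation with active subspaces of $(f,\boldsymbol{\mu})$ with respect to $\mathcal{P}$ and $r$, and $P_{1,\mathcal{X}}$ is the optimal rank-one projector on the whole domain $\mathcal{X}$.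
   Context: For a subdomain $S\subseteq\mathcal{X}$ with $\boldsymbol{\mu}(S)>0$, let $\boldsymbol{\mu}_S=\boldsymbol{\mu}|_S/\boldsymbol{\mu}(S)$ be the normalized restriction. The optimal rank-$r$ projector on $S$ is an orthogonal projector $P_{r,S}:\mathbb{R}^n\to\mathbb{R}^n$ solving $$P_{r,S}=\operatorname{argmin}_{P^2=P,\;P=P^T,\;\operatorname{rank}(P)=r}\;\mathbb{E}_{\boldsymbol{\mu}_S}\|(\mathrm{Id}-P)\nabla f\|^2,$$ where $\nabla f$ is the (almost everywhere defined) gradient of $f$. For a projector $P$ and a probability measure $\nu$, $\mathbb{E}_{\nu}[f\mid P]$ denotes the conditional expectation of $f$ under $\nu$ given the $\sigma$-algebra generated by $\mathbf{x}\mapsto P\mathbf{x}$. Given a partition $\mathcal{P}=\{S_i\}$ of the domain and a map $r:\mathcal{P}\to\{1,\dots,n_r\}$, the local ridge approximation with active subspaces $R_{AS}(r,f,\boldsymbol{\mu})$ is the function defined on each $S_i$ by $R_{AS}(r,f,\boldsymbol{\mu})|_{S_i}=\mathbb{E}_{\boldsymbol{\mu}_{S_i}}[f\mid P_{r(S_i),S_i}]$. Here $P_{1,\mathcal{X}}$ is the optimal rank-one projector with $S=\mathcal{X}$ (and $\boldsymbol{\mu}_{\mathcal{X}}=\boldsymbol{\mu}$). *)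

theory Defs
  imports "HOL-Analysis.Analysis" "HOL-Probability.Probability"
begin

text \<open>Gradient of a scalar field on R^n (defined where f is Frechet differentiable,
  set to 0 elsewhere, which is a null set in the application).\<close>
definition grad :: "(real^'n \<Rightarrow> real) \<Rightarrow> real^'n \<Rightarrow> real^'n" where
  "grad f x = (if f differentiable (at x)
               then (\<chi> i. frechet_derivative f (at x) (axis i 1)) else 0)"

definition orth_proj :: "nat \<Rightarrow> real^'n^'n \<Rightarrow> bool" where
  "orth_proj r P \<longleftrightarrow> P ** P = P \<and> transpose P = P \<and> rank P = r"

definition restr_norm :: "'a measure \<Rightarrow> 'a set \<Rightarrow> 'a measure" where
  "restr_norm \<mu> S = uniform_measure \<mu> S"

definition proj_loss :: "(real^'n) measure \<Rightarrow> (real^'n) set \<Rightarrow> (real^'n \<Rightarrow> real) \<Rightarrow> real^'n^'n \<Rightarrow> real" where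
  "proj_loss \<mu> S f P = (\<integral>x. (norm ((mat 1 - P) *v grad f x))\<^sup>2 \<partial>(restr_norm \<mu> S))"

definition opt_proj :: "(real^'n) measure \<Rightarrow> (real^'n) set \<Rightarrow> nat \<Rightarrow> (real^'n \<Rightarrow> real) \<Rightarrow> real^'n^'n \<Rightarrow> bool" where
  "opt_proj \<mu> S r f P \<longleftrightarrow> orth_proj r P \<and>
     (\<forall>Q. orth_proj r Q \<longrightarrow> proj_loss \<mu> S f P \<le> proj_loss \<mu> S f Q)"

definition proj_sigma :: "(real^'n) measure \<Rightarrow> real^'n^'n \<Rightarrow> (real^'n) measure" where
  "proj_sigma \<nu> P = vimage_algebra (space \<nu>) (\<lambda>x. P *v x) borel"

definition cond_exp_proj :: "(real^'n) measure \<Rightarrow> (real^'n \<Rightarrow> real) \<Rightarrow> real^'n^'n \<Rightarrow> real^'n \<Rightarrow> real" where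
  "cond_exp_proj \<nu> f P = real_cond_exp \<nu> (proj_sigma \<nu> P) f"

definition X2 :: "(real^2) set" where
  "X2 = cbox (vector [-1, -1]) (vector [1, 1])"

definition mu2 :: "(real^2) measure" where
  "mu2 = uniform_measure lborel X2"

definition SetA :: "real \<Rightarrow> (real^2) set" where
  "SetA \<epsilon> = cbox (vector [-1, -1]) (vector [-\<epsilon>, 1])"
definition SetB :: "real \<Rightarrow> (real^2) set" where
  "SetB \<epsilon> = cbox (vector [-\<epsilon>, -1]) (vector [\<epsilon>, 1])"
definition SetC :: "real \<Rightarrow> (real^2) set" where
  "SetC \<epsilon> = cbox (vector [\<epsilon>, -1]) (vector [1, 1])"

text \<open>The function f (on the common boundaries the pieces agree).\<close>
definition fex :: "real \<Rightarrow> real \<Rightarrow> real^2 \<Rightarrow> real" where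
  "fex \<epsilon> \<omega> x = (if x$1 \<le> -\<epsilon> then x$1 + \<epsilon>
                  else if x$1 < \<epsilon> then x$1 * (x$1 + \<epsilon>) * (x$1 - \<epsilon>) * cos (\<omega> * x$2)
                  else x$1 - \<epsilon>)"

text \<open>Local ridge approximation for the partition {A,B,C} with given projectors
  on A, B, C (boundaries, a null set, are assigned to A resp. C).\<close>
definition RAS :: "real \<Rightarrow> (real^2 \<Rightarrow> real) \<Rightarrow> real^2^2 \<Rightarrow> real^2^2 \<Rightarrow> real^2^2 \<Rightarrow> real^2 \<Rightarrow> real" where
  "RAS \<epsilon> f PA PB PC x =
     (if x$1 \<le> -\<epsilon> then cond_exp_proj (restr_norm mu2 (SetA \<epsilon>)) f PA x
      else if x$1 < \<epsilon> then cond_exp_proj (restr_norm mu2 (SetB \<epsilon>)) f PB x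
      else cond_exp_proj (restr_norm mu2 (SetC \<epsilon>)) f PC x)"

end

theory Submission
  imports Defs
begin

text \<open>
  On the whole square the first partial derivative of \<open>f\<close> equals \<open>1\<close> on \<open>A \<union> C\<close> and is tiny on
  the thin strip \<open>B\<close>, so the optimal rank-one projector is the projection onto \<open>e\<^sub>1\<close>. As \<open>f\<close> is a
  function of \<open>x\<^sub>1\<close> outside \<open>B\<close>, the global ridge approximation then errs by at most
  \<open>\<integral>\<^sub>B f\<^sup>2\<close>. On \<open>B\<close> itself the fast oscillation \<open>cos (\<omega> x\<^sub>2)\<close> makes the second partial
  derivative dominate, so the optimal projector there is the projection onto \<open>e\<^sub>2\<close>. But \<open>f\<close> is odd
  in \<open>x\<^sub>1\<close> on \<open>B\<close>, while the uniform measure on \<open>B\<close> and every event generated by \<open>x\<^sub>2\<close> are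
  invariant under \<open>x\<^sub>1 \<mapsto> -x\<^sub>1\<close>; hence the conditional expectation on \<open>B\<close> vanishes and the local
  ridge approximation errs by the full \<open>\<integral>\<^sub>B f\<^sup>2\<close>.
\<close>

section \<open>Reflection in a coordinate hyperplane\<close>

definition coord_reflect :: "'a::euclidean_space \<Rightarrow> 'a \<Rightarrow> 'a" where
  "coord_reflect b x = x - (2 * (x \<bullet> b)) *\<^sub>R b"

lemma coord_reflect_eq_affine:
  assumes b: "b \<in> Basis"
  shows "coord_reflect b x = (\<Sum>j\<in>Basis. ((if j = b then -1 else 1) * (x \<bullet> j)) *\<^sub>R j)"
proof -
  have "((if j = b then -1 else 1) * (x \<bullet> j)) *\<^sub>R j
      = (x \<bullet> j) *\<^sub>R j - (if j = b then (2 * (x \<bullet> b)) *\<^sub>R b else 0)" for j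
    by (cases "j = b") (simp_all flip: scaleR_diff_left)
  then have "(\<Sum>j\<in>Basis. ((if j = b then -1 else 1) * (x \<bullet> j)) *\<^sub>R j)
      = (\<Sum>j\<in>Basis. (x \<bullet> j) *\<^sub>R j - (if j = b then (2 * (x \<bullet> b)) *\<^sub>R b else 0))"
    by (intro sum.cong refl)
  also have "\<dots> = coord_reflect b x"
    using b by (simp add: sum_subtractf euclidean_representation coord_reflect_def)
  finally show ?thesis ..
qed

lemma distr_lborel_coord_reflect:
  assumes b: "b \<in> Basis"
  shows "distr lborel borel (coord_reflect b) = lborel"
proof -
  let ?c = "\<lambda>j. if j = b then -1 else 1 :: real"
  have "lborel = density (distr lborel borel (\<lambda>x. 0 + (\<Sum>j\<in>Basis. (?c j * (x \<bullet> j)) *\<^sub>R j)))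
      (\<lambda>_. \<Prod>j\<in>Basis. \<bar>?c j\<bar>)"
    by (rule lborel_affine_euclidean) simp
  also have "(\<lambda>x. 0 + (\<Sum>j\<in>Basis. (?c j * (x \<bullet> j)) *\<^sub>R j)) = coord_reflect b"
    using coord_reflect_eq_affine[OF b] by auto
  also have "(\<Prod>j\<in>Basis. \<bar>?c j\<bar>) = 1"
    by (intro prod.neutral) auto
  finally show ?thesis
    by (simp add: density_1)
qed

lemma coord_reflect_axis_nth:
  "coord_reflect (axis i 1) x $ j = (if j = i then - x $ j else (x :: real^'n) $ j)"
  by (simp add: coord_reflect_def inner_axis) (simp add: axis_def)

lemma linear_coord_reflect: "linear (coord_reflect b)"
  by (auto simp: linear_iff coord_reflect_def inner_add_left algebra_simps)

lemma continuous_on_coord_reflect: "continuous_on S (coord_reflect b)"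
  unfolding coord_reflect_def by (intro continuous_intros)

lemma coord_reflect_measurable [measurable]: "coord_reflect b \<in> borel_measurable borel"
  by (intro borel_measurable_continuous_onI continuous_on_coord_reflect)

section \<open>Uniform measures\<close>

lemma uniform_measure_uniform_measure:
  assumes S: "S \<in> sets M" "S \<subseteq> X" "emeasure M S \<noteq> 0"
    and X: "X \<in> sets M" "emeasure M X \<noteq> \<infinity>"
  shows "uniform_measure (uniform_measure M X) S = uniform_measure M S"
proof (rule measure_eqI)
  fix A assume "A \<in> sets (uniform_measure (uniform_measure M X) S)"
  then have A: "A \<in> sets M" by simp
  have S_le_X: "emeasure M S \<le> emeasure M X" "emeasure M (S \<inter> A) \<le> emeasure M X"
    using S(2) X(1) by (auto intro!: emeasure_mono)
  have eX: "emeasure M X = ennreal (measure M X)"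
    using X(2) by (intro emeasure_eq_ennreal_measure) simp
  have eS: "emeasure M S = ennreal (measure M S)" and eSA: "emeasure M (S \<inter> A) = ennreal (measure M (S \<inter> A))"
    using S_le_X X(2) by (metis emeasure_eq_ennreal_measure infinity_ennreal_def top_unique)+
  have S_pos: "measure M S > 0"
    using S(3) by (simp add: eS zero_less_measure_iff)
  have X_pos: "measure M X > 0"
    using S_le_X(1) S_pos by (simp add: eS eX)
  have "X \<inter> S = S" "X \<inter> (S \<inter> A) = S \<inter> A" using S(2) by auto
  then have "emeasure (uniform_measure (uniform_measure M X) S) A
      = (emeasure M (S \<inter> A) / emeasure M X) / (emeasure M S / emeasure M X)"
    using S(1) X(1) A by simp
  also have "\<dots> = ennreal (measure M (S \<inter> A) / measure M X / (measure M S / measure M X))"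
    using X_pos S_pos by (simp add: eX eS eSA divide_ennreal)
  also have "\<dots> = emeasure M (S \<inter> A) / emeasure M S"
    using X_pos S_pos by (simp add: eS eSA divide_ennreal)
  finally show "emeasure (uniform_measure (uniform_measure M X) S) A = emeasure (uniform_measure M S) A"
    using S(1) A by simp
qed simp

lemma distr_uniform_measure_invariant:
  assumes T: "T \<in> M \<rightarrow>\<^sub>M M" "distr M M T = M"
    and K: "K \<in> sets M" "T -` K \<inter> space M = K"
  shows "distr (uniform_measure M K) (uniform_measure M K) T = uniform_measure M K"
proof (rule measure_eqI)
  fix A assume "A \<in> sets (distr (uniform_measure M K) (uniform_measure M K) T)"
  then have A: "A \<in> sets M" by simp
  have T_unif: "T \<in> uniform_measure M K \<rightarrow>\<^sub>M uniform_measure M K"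
    using T(1) measurable_cong_sets[of "uniform_measure M K" M "uniform_measure M K" M] by simp
  have "K \<inter> (T -` A \<inter> space M) = T -` (K \<inter> A) \<inter> space M"
    using K(2) by blast
  then have "emeasure M (K \<inter> (T -` A \<inter> space M)) = emeasure (distr M M T) (K \<inter> A)"
    using T(1) K(1) A by (simp add: emeasure_distr)
  then show "emeasure (distr (uniform_measure M K) (uniform_measure M K) T) A = emeasure (uniform_measure M K) A"
    using T(2) K(1) A measurable_sets[OF T(1) A] by (simp add: emeasure_distr[OF T_unif])
qed simp

lemma measurable_uniform_measure: "measurable (uniform_measure M A) N = measurable M N"
  by (simp cong: measurable_cong_sets)

lemma uniform_measure_lborel_coord_reflect:
  assumes b: "b \<in> Basis" and K: "K \<in> sets borel" "coord_reflect b -` K = K"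
  shows "coord_reflect b \<in> uniform_measure lborel K \<rightarrow>\<^sub>M uniform_measure lborel K"
    and "distr (uniform_measure lborel K) (uniform_measure lborel K) (coord_reflect b) = uniform_measure lborel K"
proof -
  have T: "coord_reflect b \<in> lborel \<rightarrow>\<^sub>M lborel" "distr lborel lborel (coord_reflect b) = lborel"
    using distr_lborel_coord_reflect[OF b] by (simp_all cong: distr_cong)
  then show "coord_reflect b \<in> uniform_measure lborel K \<rightarrow>\<^sub>M uniform_measure lborel K"
    by simp
  show "distr (uniform_measure lborel K) (uniform_measure lborel K) (coord_reflect b) = uniform_measure lborel K"
    using K by (intro distr_uniform_measure_invariant T) simp_all
qed

lemma AE_uniform_measure_subset:
  assumes S: "emeasure M S \<noteq> 0" "emeasure M S \<noteq> \<infinity>" and X: "X \<in> sets M"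
    and P: "AE x in uniform_measure M S. P x"
  shows "AE x in uniform_measure M X. x \<in> S \<longrightarrow> P x"
proof -
  have "AE x in M. x \<in> S \<longrightarrow> P x"
    using P S by (subst (asm) AE_uniform_measure) (auto simp: less_top)
  then show ?thesis
    using X by (intro AE_uniform_measureI) (auto elim: AE_mp)
qed

lemma (in finite_measure) measure_mult_le_integral:
  fixes f :: "'a \<Rightarrow> real"
  assumes f: "integrable M f" and R: "R \<in> sets M" and le: "AE x in M. c * indicator R x \<le> f x"
  shows "c * measure M R \<le> integral\<^sup>L M f"
proof -
  have "integrable M (\<lambda>x. c * indicator R x)"
    using R by (intro integrable_mult_right integrable_indicator) (auto simp: less_top[symmetric])
  then have "(\<integral>x. c * indicator R x \<partial>M) \<le> integral\<^sup>L M f"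
    using f le by (rule integral_mono_AE)
  then show ?thesis
    using R by (simp add: Int_absorb2 sets.sets_into_space)
qed

lemma integral_odd_eq_0:
  fixes f :: "'a \<Rightarrow> real"
  assumes T: "T \<in> M \<rightarrow>\<^sub>M M" "distr M M T = M"
    and f: "f \<in> borel_measurable M" and odd: "\<And>x. x \<in> space M \<Longrightarrow> f (T x) = - f x"
  shows "integral\<^sup>L M f = 0"
proof -
  have "integral\<^sup>L M f = integral\<^sup>L (distr M M T) f" by (simp add: T(2))
  also have "\<dots> = (\<integral>x. f (T x) \<partial>M)" using T(1) f by (rule integral_distr)
  also have "\<dots> = - integral\<^sup>L M f" using odd by (simp cong: Bochner_Integration.integral_cong)
  finally show ?thesis by simp
qed

lemma integral_uniform_lborel_odd_eq_0:
  fixes f :: "'a::euclidean_space \<Rightarrow> real"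
  assumes b: "b \<in> Basis" and K: "K \<in> sets borel" "coord_reflect b -` K = K"
    and f: "f \<in> borel_measurable borel" and odd: "\<And>x. f (coord_reflect b x) = - f x"
  shows "(\<integral>x. f x \<partial>uniform_measure lborel K) = 0"
  using uniform_measure_lborel_coord_reflect[OF b K] f odd
  by (intro integral_odd_eq_0) auto

section \<open>Conditional expectation given a linear projection\<close>

lemma abs_le_imp_square_le: "\<bar>u\<bar> \<le> U \<Longrightarrow> u\<^sup>2 \<le> (U::real)\<^sup>2"
  using power_mono[of "\<bar>u\<bar>" U 2] by simp

context sigma_finite_subalgebra
begin

lemma real_cond_exp_abs_le:
  assumes "integrable M f" "AE x in M. \<bar>f x\<bar> \<le> B"
  shows "AE x in M. \<bar>real_cond_exp M F f x\<bar> \<le> B"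
proof -
  have "AE x in M. real_cond_exp M F f x \<le> B"
    using assms by (intro real_cond_exp_le_c) auto
  moreover have "AE x in M. - B \<le> real_cond_exp M F f x"
    using assms by (intro real_cond_exp_ge_c) auto
  ultimately show ?thesis by eventually_elim auto
qed

lemma real_cond_exp_odd_eq_0:
  assumes T: "T \<in> M \<rightarrow>\<^sub>M M" "distr M M T = M"
    and F_invariant: "\<And>A. A \<in> sets F \<Longrightarrow> T -` A \<inter> space M = A"
    and f: "integrable M f" and odd: "\<And>x. x \<in> space M \<Longrightarrow> f (T x) = - f x"
  shows "AE x in M. real_cond_exp M F f x = 0"
proof (rule real_cond_exp_charact)
  fix A assume A: "A \<in> sets F"
  then have "A \<in> sets M"
    using subalg by (auto simp: subalgebra_def)
  moreover have "indicator A (T x) = (indicator A x :: real)" if "x \<in> space M" for x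
    using F_invariant[OF A] that by (auto simp: indicator_def)
  ultimately have "(\<integral>x. indicator A x * f x \<partial>M) = 0"
    using f T odd by (intro integral_odd_eq_0) auto
  then show "(\<integral>x\<in>A. f x \<partial>M) = (\<integral>x\<in>A. 0 \<partial>M)"
    by (simp add: set_lebesgue_integral_def)
qed (use f in auto)

lemma real_cond_exp_L2_optimal:
  fixes f g :: "'a \<Rightarrow> real"
  assumes "finite_measure M"
    and f[measurable]: "f \<in> borel_measurable M" and f_bound: "AE x in M. \<bar>f x\<bar> \<le> B"
    and g[measurable]: "g \<in> borel_measurable F" and g_bound: "AE x in M. \<bar>g x\<bar> \<le> C"
  shows "(\<integral>x. (f x - real_cond_exp M F f x)\<^sup>2 \<partial>M) \<le> (\<integral>x. (f x - g x)\<^sup>2 \<partial>M)"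
proof -
  interpret finite_measure M by fact
  define h where "h = real_cond_exp M F f"
  define d where "d x = h x - g x" for x
  have [measurable]: "h \<in> borel_measurable F" "h \<in> borel_measurable M" "g \<in> borel_measurable M"
    using measurable_from_subalg[OF subalg g] by (auto simp: h_def)
  have [measurable]: "d \<in> borel_measurable F" "d \<in> borel_measurable M"
    unfolding d_def by measurable
  have "integrable M f"
    using f_bound by (intro integrable_const_bound[where B = B]) auto
  then have h_bound: "AE x in M. \<bar>h x\<bar> \<le> B"
    unfolding h_def using f_bound by (rule real_cond_exp_abs_le)
  have d_bound: "AE x in M. \<bar>d x\<bar> \<le> B + C"
    using h_bound g_bound by eventually_elim (auto simp: d_def)
  have bounded_product: "\<bar>u * v\<bar> \<le> U * V" if "\<bar>u\<bar> \<le> U" "\<bar>v\<bar> \<le> V" for u v U V :: real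
    using that by (simp add: abs_mult mult_mono')
  have "AE x in M. \<bar>d x * f x\<bar> \<le> (B + C) * B"
    using d_bound f_bound by eventually_elim (rule bounded_product)
  then have int_df: "integrable M (\<lambda>x. d x * f x)"
    by (intro integrable_const_bound[where B = "(B + C) * B"]) auto
  have "AE x in M. \<bar>d x * h x\<bar> \<le> (B + C) * B"
    using d_bound h_bound by eventually_elim (rule bounded_product)
  then have int_dh: "integrable M (\<lambda>x. d x * h x)"
    by (intro integrable_const_bound[where B = "(B + C) * B"]) auto
  have "AE x in M. (d x)\<^sup>2 \<le> (B + C)\<^sup>2"
    using d_bound by eventually_elim (rule abs_le_imp_square_le)
  then have int_dd: "integrable M (\<lambda>x. (d x)\<^sup>2)"
    by (intro integrable_const_bound[where B = "(B + C)\<^sup>2"]) auto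
  have "AE x in M. (f x - h x)\<^sup>2 \<le> (B + B)\<^sup>2"
    using f_bound h_bound by eventually_elim (rule abs_le_imp_square_le, linarith)
  then have int_fh: "integrable M (\<lambda>x. (f x - h x)\<^sup>2)"
    by (intro integrable_const_bound[where B = "(B + B)\<^sup>2"]) auto
  have orth: "(\<integral>x. d x * h x \<partial>M) = (\<integral>x. d x * f x \<partial>M)"
    unfolding h_def using int_df by (rule real_cond_exp_intg(2)) auto
  have "(f x - g x)\<^sup>2 = (f x - h x)\<^sup>2 + 2 * (d x * f x - d x * h x) + (d x)\<^sup>2" for x
    by (simp add: d_def power2_eq_square algebra_simps)
  then have "(\<integral>x. (f x - g x)\<^sup>2 \<partial>M)
      = (\<integral>x. (f x - h x)\<^sup>2 \<partial>M) + 2 * ((\<integral>x. d x * f x \<partial>M) - (\<integral>x. d x * h x \<partial>M)) + (\<integral>x. (d x)\<^sup>2 \<partial>M)"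
    using int_df int_dh int_dd int_fh by simp
  also have "\<dots> \<ge> (\<integral>x. (f x - h x)\<^sup>2 \<partial>M)"
    by (simp add: orth)
  finally show ?thesis unfolding h_def .
qed

end

lemma sets_proj_sigma:
  assumes "sets M = sets borel"
  shows "sets (proj_sigma M P) = {(\<lambda>x. P *v x) -` A | A. A \<in> sets borel}"
  using sets_eq_imp_space_eq[OF assms] unfolding proj_sigma_def
  by (subst sets_vimage_algebra2) auto

lemma measurable_proj_sigma:
  assumes "h \<in> borel_measurable borel"
  shows "(\<lambda>x. h (P *v x)) \<in> borel_measurable (proj_sigma M P)"
proof -
  have "(\<lambda>x. P *v x) \<in> proj_sigma M P \<rightarrow>\<^sub>M borel"
    unfolding proj_sigma_def by (rule measurable_vimage_algebra1) simp
  then show ?thesis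
    using assms by (rule measurable_compose)
qed

lemma sigma_finite_subalgebra_proj_sigma:
  fixes P :: "real^'n^'n"
  assumes "finite_measure M" "sets M = sets borel"
  shows "sigma_finite_subalgebra M (proj_sigma M P)"
proof -
  have meas: "(\<lambda>x. P *v x) \<in> borel_measurable borel"
    by (intro borel_measurable_continuous_onI continuous_intros)
  have "(\<lambda>x. P *v x) -` A \<in> sets borel" if "A \<in> sets borel" for A
    using measurable_sets[OF meas that] by simp
  then have "sets (proj_sigma M P) \<subseteq> sets M"
    by (auto simp: sets_proj_sigma[OF assms(2)] assms(2))
  moreover have "space (proj_sigma M P) = space M"
    by (simp add: proj_sigma_def)
  ultimately have "subalgebra M (proj_sigma M P)"
    by (simp add: subalgebra_def)
  with assms(1) show ?thesis
    by (intro finite_measure_subalgebra_is_sigma_finite finite_measure_subalgebra.intro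
        finite_measure_subalgebra_axioms.intro)
qed

lemma cond_exp_proj_uniform_lborel_measurable [measurable]:
  "cond_exp_proj (uniform_measure lborel S) f P \<in> borel_measurable borel"
  using borel_measurable_cond_exp2[of "uniform_measure lborel S" _ f]
  by (simp add: cond_exp_proj_def measurable_uniform_measure)

section \<open>Rank-one orthogonal projectors in the plane\<close>

definition proj_e1 :: "real^2^2" where
  "proj_e1 = vector [vector [1, 0], vector [0, 0]]"

definition proj_e2 :: "real^2^2" where
  "proj_e2 = vector [vector [0, 0], vector [0, 1]]"

lemma proj_e1_nth [simp]: "proj_e1 $ 1 $ 1 = 1" "proj_e1 $ 1 $ 2 = 0" "proj_e1 $ 2 $ 1 = 0" "proj_e1 $ 2 $ 2 = 0"
  by (simp_all add: proj_e1_def)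

lemma proj_e2_nth [simp]: "proj_e2 $ 1 $ 1 = 0" "proj_e2 $ 1 $ 2 = 0" "proj_e2 $ 2 $ 1 = 0" "proj_e2 $ 2 $ 2 = 1"
  by (simp_all add: proj_e2_def)

lemma matrix2_eqI:
  fixes P Q :: "real^2^2"
  shows "P$1$1 = Q$1$1 \<Longrightarrow> P$1$2 = Q$1$2 \<Longrightarrow> P$2$1 = Q$2$1 \<Longrightarrow> P$2$2 = Q$2$2 \<Longrightarrow> P = Q"
  by (simp add: vec_eq_iff forall_2)

lemma orth_proj_diagonal:
  fixes P :: "real^2^2"
  assumes "P$1$2 = 0" "P$2$1 = 0" "P$1$1 \<in> {0, 1}" "P$2$2 \<in> {0, 1}" "P$1$1 + P$2$2 = 1"
  shows "orth_proj 1 P"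
proof -
  have "P ** P = P" "transpose P = P"
    using assms by (auto simp: matrix_matrix_mult_def transpose_def vec_eq_iff forall_2 sum_2)
  moreover have "rank P \<noteq> 0"
    using assms by (auto simp: rank_eq_0 vec_eq_iff forall_2)
  moreover have "rank P < CARD(2)"
    using assms det_eq_0_rank[of P] by (auto simp: det_2)
  ultimately show ?thesis by (simp add: orth_proj_def)
qed

lemma orth_proj_proj_e1: "orth_proj 1 proj_e1"
  and orth_proj_proj_e2: "orth_proj 1 proj_e2"
  by (rule orth_proj_diagonal; simp)+

lemma orth_proj1_entries:
  fixes P :: "real^2^2"
  assumes "orth_proj 1 P"
  shows "P$2$1 = P$1$2" "P$1$1 + P$2$2 = 1"
    "P$1$1 = (P$1$1)\<^sup>2 + (P$1$2)\<^sup>2" "P$2$2 = (P$2$2)\<^sup>2 + (P$1$2)\<^sup>2"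
proof -
  have idem: "P ** P = P" and sym: "transpose P = P" and rank: "rank P = 1"
    using assms by (auto simp: orth_proj_def)
  show sym12: "P$2$1 = P$1$2"
    using arg_cong[OF sym, of "\<lambda>A. A$1$2"] by (simp add: transpose_def)
  have idem_entries: "(P$1$1)\<^sup>2 + (P$1$2)\<^sup>2 = P$1$1" "P$1$2 * (P$1$1 + P$2$2) = P$1$2"
      "(P$2$2)\<^sup>2 + (P$1$2)\<^sup>2 = P$2$2"
    using arg_cong[OF idem, of "\<lambda>A. A$1$1"] arg_cong[OF idem, of "\<lambda>A. A$1$2"]
      arg_cong[OF idem, of "\<lambda>A. A$2$2"] sym12
    by (simp_all add: matrix_matrix_mult_def sum_2 power2_eq_square algebra_simps)
  then show "P$1$1 = (P$1$1)\<^sup>2 + (P$1$2)\<^sup>2" "P$2$2 = (P$2$2)\<^sup>2 + (P$1$2)\<^sup>2"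
    by simp_all
  show "P$1$1 + P$2$2 = 1"
  proof (cases "P$1$2 = 0")
    case False
    then show ?thesis using idem_entries(2) by simp
  next
    \<comment> \<open>a diagonal idempotent has entries in \<open>{0, 1}\<close>, and rank one excludes \<open>0\<close> and the identity\<close>
    case True
    then have diag: "P$1$1 \<in> {0, 1}" "P$2$2 \<in> {0, 1}"
      using idem_entries by (auto simp: power2_eq_square)
    have "P \<noteq> 0" "P \<noteq> mat 1"
      using rank rank_I[where 'n = 2] by auto
    then show ?thesis
      using diag True sym12 by (auto simp: vec_eq_iff forall_2 mat_def)
  qed
qed

lemma orth_proj1_residual_norm:
  fixes P :: "real^2^2" and g :: "real^2"
  assumes "orth_proj 1 P"
  shows "(norm ((mat 1 - P) *v g))\<^sup>2 = P$2$2 * (g$1)\<^sup>2 - 2 * P$1$2 * (g$1 * g$2) + P$1$1 * (g$2)\<^sup>2"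
proof -
  note P = orth_proj1_entries[OF assms]
  have "((mat 1 - P) *v g)$1 = (1 - P$1$1) * g$1 - P$1$2 * g$2"
    "((mat 1 - P) *v g)$2 = (1 - P$2$2) * g$2 - P$2$1 * g$1"
    by (simp_all add: matrix_vector_mult_def sum_2 mat_def algebra_simps)
  moreover have "1 - P$1$1 = P$2$2" "1 - P$2$2 = P$1$1"
    using P(2) by linarith+
  ultimately have "((mat 1 - P) *v g)$1 = P$2$2 * g$1 - P$1$2 * g$2"
    "((mat 1 - P) *v g)$2 = P$1$1 * g$2 - P$1$2 * g$1"
    by (simp_all only: P(1))
  then have "(norm ((mat 1 - P) *v g))\<^sup>2 = (P$2$2 * g$1 - P$1$2 * g$2)\<^sup>2 + (P$1$1 * g$2 - P$1$2 * g$1)\<^sup>2"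
    by (simp add: norm_vec_def L2_set_def sum_2)
  also have "\<dots> = ((P$2$2)\<^sup>2 + (P$1$2)\<^sup>2) * (g$1)\<^sup>2 - 2 * P$1$2 * (P$1$1 + P$2$2) * (g$1 * g$2)
        + ((P$1$1)\<^sup>2 + (P$1$2)\<^sup>2) * (g$2)\<^sup>2"
    by (simp add: power2_eq_square algebra_simps)
  finally show ?thesis
    unfolding P(2) P(3)[symmetric] P(4)[symmetric] by simp
qed

lemma orth_proj1_diag_nonneg:
  fixes P :: "real^2^2"
  assumes "orth_proj 1 P"
  shows "0 \<le> P$1$1" "0 \<le> P$2$2"
  using orth_proj1_entries(3,4)[OF assms] by (metis add_nonneg_nonneg zero_le_power2)+

lemma orth_proj1_eq_proj_e1_iff:
  fixes P :: "real^2^2"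
  assumes "orth_proj 1 P"
  shows "P = proj_e1 \<longleftrightarrow> P$2$2 = 0"
  using orth_proj1_entries[OF assms] by (auto intro: matrix2_eqI)

lemma orth_proj1_eq_proj_e2_iff:
  fixes P :: "real^2^2"
  assumes "orth_proj 1 P"
  shows "P = proj_e2 \<longleftrightarrow> P$1$1 = 0"
  using orth_proj1_entries[OF assms] by (auto intro: matrix2_eqI)

lemma orth_proj1_minimisers:
  fixes L :: "real^2^2 \<Rightarrow> real"
  assumes L: "\<And>P. orth_proj 1 P \<Longrightarrow> L P = P$2$2 * a + P$1$1 * b"
  shows "b < a \<Longrightarrow> {P. orth_proj 1 P \<and> (\<forall>Q. orth_proj 1 Q \<longrightarrow> L P \<le> L Q)} = {proj_e1}"
    and "a < b \<Longrightarrow> {P. orth_proj 1 P \<and> (\<forall>Q. orth_proj 1 Q \<longrightarrow> L P \<le> L Q)} = {proj_e2}"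
proof -
  have L1: "L P = b + P$2$2 * (a - b)" and L2: "L P = a + P$1$1 * (b - a)" if "orth_proj 1 P" for P
  proof -
    have P11: "P$1$1 = 1 - P$2$2" and P22: "P$2$2 = 1 - P$1$1"
      using orth_proj1_entries(2)[OF that] by linarith+
    show "L P = b + P$2$2 * (a - b)"
      unfolding L[OF that] P11 by (simp add: algebra_simps)
    show "L P = a + P$1$1 * (b - a)"
      unfolding L[OF that] P22 by (simp add: algebra_simps)
  qed
  show "{P. orth_proj 1 P \<and> (\<forall>Q. orth_proj 1 Q \<longrightarrow> L P \<le> L Q)} = {proj_e1}" if "b < a"
  proof (intro equalityI subsetI)
    fix P assume "P \<in> {P. orth_proj 1 P \<and> (\<forall>Q. orth_proj 1 Q \<longrightarrow> L P \<le> L Q)}"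
    then have P: "orth_proj 1 P" and "L P \<le> L proj_e1"
      using orth_proj_proj_e1 by auto
    then have "P$2$2 * (a - b) \<le> 0"
      using L1[OF P] L1[OF orth_proj_proj_e1] by simp
    then have "P$2$2 = 0"
      using orth_proj1_diag_nonneg(2)[OF P] that by (simp add: mult_le_0_iff)
    then show "P \<in> {proj_e1}"
      using orth_proj1_eq_proj_e1_iff[OF P] by simp
  qed (use orth_proj_proj_e1 L1 orth_proj1_diag_nonneg(2) that in auto)
  show "{P. orth_proj 1 P \<and> (\<forall>Q. orth_proj 1 Q \<longrightarrow> L P \<le> L Q)} = {proj_e2}" if "a < b"
  proof (intro equalityI subsetI)
    fix P assume "P \<in> {P. orth_proj 1 P \<and> (\<forall>Q. orth_proj 1 Q \<longrightarrow> L P \<le> L Q)}"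
    then have P: "orth_proj 1 P" and "L P \<le> L proj_e2"
      using orth_proj_proj_e2 by auto
    then have "P$1$1 * (b - a) \<le> 0"
      using L2[OF P] L2[OF orth_proj_proj_e2] by simp
    then have "P$1$1 = 0"
      using orth_proj1_diag_nonneg(1)[OF P] that by (simp add: mult_le_0_iff)
    then show "P \<in> {proj_e2}"
      using orth_proj1_eq_proj_e2_iff[OF P] by simp
  qed (use orth_proj_proj_e2 L2 orth_proj1_diag_nonneg(1) that in auto)
qed

lemma not_differentiable_at_kink:
  fixes f :: "'a::real_normed_vector \<Rightarrow> real"
  assumes left: "((\<lambda>t. f (x + t *\<^sub>R v)) has_real_derivative l) (at 0 within {..0})"
    and right: "((\<lambda>t. f (x + t *\<^sub>R v)) has_real_derivative r) (at 0 within {0..})"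
    and "l \<noteq> r"
  shows "\<not> f differentiable (at x)"
proof
  assume "f differentiable (at x)"
  then obtain D where D: "(f has_derivative D) (at (x + 0 *\<^sub>R v))"
    by (auto simp: differentiable_def)
  have "((\<lambda>t. x + t *\<^sub>R v) has_derivative (\<lambda>t. t *\<^sub>R v)) (at 0)"
    by (auto intro!: derivative_eq_intros)
  from has_derivative_compose[OF this D]
  have "((\<lambda>t. f (x + t *\<^sub>R v)) has_real_derivative D v) (at 0)"
    using linear_scale[OF has_derivative_linear[OF D]]
    by (simp add: has_field_derivative_def mult_commute_abs)
  then have "l = D v" "r = D v"
    using left right has_field_derivative_unique trivial_limit_at_left_real trivial_limit_at_right_real
    unfolding at_within_Iic_at_left at_within_Ici_at_right
    by (metis has_field_derivative_at_within)+
  with \<open>l \<noteq> r\<close> show False by simp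
qed

lemma grad_eq_has_derivative:
  assumes "(f has_derivative D) (at x)"
  shows "grad f x = (\<chi> i. D (axis i 1))"
  using assms frechet_derivative_at[OF assms] by (auto simp: grad_def differentiable_def)

lemma has_derivative_vec_nth: "((\<lambda>y. y $ i) has_derivative (\<lambda>h. h $ i)) F"
  by (rule bounded_linear_imp_has_derivative[OF bounded_linear_vec_nth])

lemma has_derivative_nth_comp:
  assumes "(\<phi> has_real_derivative d) (at (x $ i))"
  shows "((\<lambda>y::real^'n. \<phi> (y $ i)) has_derivative (\<lambda>h. d * h $ i)) (at x)"
  using has_derivative_compose[OF has_derivative_vec_nth assms[unfolded has_field_derivative_def]]
  by (simp add: mult.commute)

lemma sin_ge_half: "1 \<le> (t::real) \<Longrightarrow> t \<le> 2 \<Longrightarrow> 1/2 \<le> sin t"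
  using sin_monotone_2pi_le[of "pi/6" t] sin_monotone_2pi_le[of "pi/6" "pi - t"] pi_gt3 pi_less_4
  by (cases "t \<le> pi/2") (auto simp: sin_30)

section \<open>The example: the partition, the function and its gradient\<close>

lemma Basis_real2: "(Basis :: (real^2) set) = {axis 1 1, axis 2 1}"
  by (auto simp: Basis_vec_def) (metis exhaust_2)

lemma mem_box2:
  "(x::real^2) \<in> cbox (vector [a1, a2]) (vector [b1, b2]) \<longleftrightarrow> a1 \<le> x$1 \<and> x$1 \<le> b1 \<and> a2 \<le> x$2 \<and> x$2 \<le> b2"
  by (simp add: mem_box_cart forall_2)

lemma emeasure_box2:
  assumes "a1 \<le> b1" "a2 \<le> b2"
  shows "emeasure lborel (cbox (vector [a1, a2]) (vector [b1, b2]) :: (real^2) set) = ennreal ((b1 - a1) * (b2 - a2))"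
  using assms by (simp add: emeasure_lborel_cbox_eq Basis_real2 inner_axis axis_eq_axis)

lemma measure_box2:
  assumes "a1 \<le> b1" "a2 \<le> b2"
  shows "measure lborel (cbox (vector [a1, a2]) (vector [b1, b2]) :: (real^2) set) = (b1 - a1) * (b2 - a2)"
  using emeasure_box2[OF assms] assms by (simp add: measure_def)

lemma mem_X2: "x \<in> X2 \<longleftrightarrow> \<bar>x$1\<bar> \<le> 1 \<and> \<bar>x$2\<bar> \<le> 1"
  by (auto simp: X2_def mem_box2)

lemma mem_SetA: "x \<in> SetA e \<longleftrightarrow> -1 \<le> x$1 \<and> x$1 \<le> -e \<and> \<bar>x$2\<bar> \<le> 1"
  by (auto simp: SetA_def mem_box2)

lemma mem_SetB: "x \<in> SetB e \<longleftrightarrow> \<bar>x$1\<bar> \<le> e \<and> \<bar>x$2\<bar> \<le> 1"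
  by (auto simp: SetB_def mem_box2)

lemma mem_SetC: "x \<in> SetC e \<longleftrightarrow> e \<le> x$1 \<and> x$1 \<le> 1 \<and> \<bar>x$2\<bar> \<le> 1"
  by (auto simp: SetC_def mem_box2)

abbreviation reflect1 :: "real^2 \<Rightarrow> real^2" where
  "reflect1 \<equiv> coord_reflect (axis 1 1)"

lemma reflect1_reflect1: "reflect1 (reflect1 x) = x"
  by (simp add: vec_eq_iff coord_reflect_axis_nth)

lemma fex_reflect1: "0 < e \<Longrightarrow> fex e w (reflect1 x) = - fex e w x"
  by (auto simp: fex_def coord_reflect_axis_nth algebra_simps)

lemma fex_measurable [measurable]: "fex e w \<in> borel_measurable borel"
  unfolding fex_def by measurable

text \<open>Zero on the kinks \<open>\<bar>x$1\<bar> = e\<close>, where \<open>fex\<close> is not differentiable and \<open>grad\<close> is \<open>0\<close>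
  by definition.\<close>

definition fex_grad :: "real \<Rightarrow> real \<Rightarrow> real^2 \<Rightarrow> real^2" where
  "fex_grad e w x =
     (if e < \<bar>x$1\<bar> then vector [1, 0]
      else if \<bar>x$1\<bar> < e then
        vector [(3 * (x$1)\<^sup>2 - e\<^sup>2) * cos (w * x$2), - x$1 * ((x$1)\<^sup>2 - e\<^sup>2) * w * sin (w * x$2)]
      else 0)"

lemma fex_grad_nth:
  "fex_grad e w x $ 1 = (if e < \<bar>x$1\<bar> then 1 else if \<bar>x$1\<bar> < e then (3 * (x$1)\<^sup>2 - e\<^sup>2) * cos (w * x$2) else 0)"
  "fex_grad e w x $ 2 = (if \<bar>x$1\<bar> < e then - x$1 * ((x$1)\<^sup>2 - e\<^sup>2) * w * sin (w * x$2) else 0)"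
  by (simp_all add: fex_grad_def)

lemma fex_grad_nth_measurable [measurable]:
  "(\<lambda>x. fex_grad e w x $ 1) \<in> borel_measurable borel" "(\<lambda>x. fex_grad e w x $ 2) \<in> borel_measurable borel"
  unfolding fex_grad_nth by measurable measurable

lemma fex_grad_reflect1: "fex_grad e w (reflect1 x) $ 1 = fex_grad e w x $ 1"
  "fex_grad e w (reflect1 x) $ 2 = - fex_grad e w x $ 2"
  by (simp_all add: fex_grad_nth coord_reflect_axis_nth)

lemma has_derivative_fex_outside:
  assumes "0 < e" "e < \<bar>x$1\<bar>"
  shows "(fex e w has_derivative (\<lambda>h. h$1)) (at x)"
proof (cases "x$1 < 0")
  case True
  show ?thesis
  proof (rule has_derivative_transform_within_open)
    show "((\<lambda>y::real^2. y$1 + e) has_derivative (\<lambda>h. h$1)) (at x)"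
      by (auto intro!: derivative_eq_intros has_derivative_vec_nth)
    show "open {y::real^2. y$1 < -e}"
      by (intro open_Collect_less continuous_intros)
    show "x \<in> {y. y$1 < -e}"
      using assms True by simp
  qed (auto simp: fex_def)
next
  case False
  show ?thesis
  proof (rule has_derivative_transform_within_open)
    show "((\<lambda>y::real^2. y$1 - e) has_derivative (\<lambda>h. h$1)) (at x)"
      by (auto intro!: derivative_eq_intros has_derivative_vec_nth)
    show "open {y::real^2. e < y$1}"
      by (intro open_Collect_less continuous_intros)
    show "x \<in> {y. e < y$1}"
      using assms False by simp
  qed (use assms in \<open>auto simp: fex_def\<close>)
qed

lemma has_derivative_fex_inside:
  assumes "\<bar>x$1\<bar> < e"
  shows "(fex e w has_derivative
    (\<lambda>h. (3 * (x$1)\<^sup>2 - e\<^sup>2) * cos (w * x$2) * h$1 - x$1 * ((x$1)\<^sup>2 - e\<^sup>2) * w * sin (w * x$2) * h$2)) (at x)"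
proof (rule has_derivative_transform_within_open)
  let ?p = "\<lambda>t::real. t * (t + e) * (t - e)"
  have p: "(?p has_real_derivative 3 * (x$1)\<^sup>2 - e\<^sup>2) (at (x$1))"
    by (auto intro!: derivative_eq_intros simp: power2_eq_square algebra_simps)
  have c: "((\<lambda>t. cos (w * t)) has_real_derivative - sin (w * x$2) * w) (at (x$2))"
    by (auto intro!: derivative_eq_intros)
  show "((\<lambda>y::real^2. ?p (y$1) * cos (w * y$2)) has_derivative
    (\<lambda>h. (3 * (x$1)\<^sup>2 - e\<^sup>2) * cos (w * x$2) * h$1 - x$1 * ((x$1)\<^sup>2 - e\<^sup>2) * w * sin (w * x$2) * h$2)) (at x)"
    using has_derivative_mult[OF has_derivative_nth_comp[OF p] has_derivative_nth_comp[OF c]]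
    by (simp add: power2_eq_square algebra_simps)
  show "open {y::real^2. \<bar>y$1\<bar> < e}"
    by (intro open_Collect_less continuous_intros)
  show "x \<in> {y. \<bar>y$1\<bar> < e}"
    using assms by simp
qed (auto simp: fex_def)

lemma not_differentiable_fex_right_kink:
  assumes e: "0 < e" "2 * e\<^sup>2 < 1" and x: "x$1 = e"
  shows "\<not> fex e w differentiable (at x)"
proof (rule not_differentiable_at_kink)
  let ?g = "\<lambda>t. fex e w (x + t *\<^sub>R axis 1 1)"
  have g: "?g t = (if e + t \<le> -e then e + t + e else if e + t < e then
      (e + t) * (e + t + e) * (e + t - e) * cos (w * x$2) else e + t - e)" for t
    using x by (simp add: fex_def axis_def)
  show "(?g has_real_derivative 1) (at 0 within {0..})"
  proof (rule has_field_derivative_transform_within[OF _ zero_less_one])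
    show "((\<lambda>t. t) has_real_derivative 1) (at 0 within {0..})"
      by (rule DERIV_ident)
  qed (use e in \<open>auto simp: g\<close>)
  show "(?g has_real_derivative 2 * e\<^sup>2 * cos (w * x$2)) (at 0 within {..0})"
  proof (rule has_field_derivative_transform_within[where d = "2 * e"])
    show "((\<lambda>t. (e + t) * (e + t + e) * (e + t - e) * cos (w * x$2)) has_real_derivative 2 * e\<^sup>2 * cos (w * x$2))
        (at 0 within {..0})"
      by (auto intro!: derivative_eq_intros simp: power2_eq_square)
  qed (use e in \<open>auto simp: g dist_real_def\<close>)
  have "2 * e\<^sup>2 * cos (w * x$2) \<le> 2 * e\<^sup>2"
    using cos_le_one[of "w * x$2"] by (simp add: mult_left_le)
  then show "2 * e\<^sup>2 * cos (w * x$2) \<noteq> 1"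
    using e by linarith
qed

lemma not_differentiable_fex_kink:
  assumes e: "0 < e" "2 * e\<^sup>2 < 1" and x: "\<bar>x$1\<bar> = e"
  shows "\<not> fex e w differentiable (at x)"
proof (cases "x$1 = e")
  case True
  then show ?thesis by (rule not_differentiable_fex_right_kink[OF e])
next
  \<comment> \<open>at the left kink, use that \<open>fex\<close> is odd in \<open>x$1\<close>\<close>
  case False
  then have reflected: "reflect1 x $ 1 = e"
    using x by (auto simp: coord_reflect_axis_nth)
  show ?thesis
  proof
    assume "fex e w differentiable (at x)"
    then have "fex e w differentiable (at (reflect1 (reflect1 x)))"
      by (simp only: reflect1_reflect1)
    with linear_imp_differentiable[OF linear_coord_reflect]
    have "(fex e w \<circ> reflect1) differentiable (at (reflect1 x))"
      by (rule differentiable_chain_at)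
    then have "(\<lambda>y. - fex e w (reflect1 y)) differentiable (at (reflect1 x))"
      unfolding o_def by (rule differentiable_minus)
    moreover have "(\<lambda>y. - fex e w (reflect1 y)) = fex e w"
      using e by (simp add: fex_reflect1)
    ultimately have "fex e w differentiable (at (reflect1 x))"
      by (simp only:)
    with not_differentiable_fex_right_kink[OF e reflected] show False
      by contradiction
  qed
qed

lemma grad_fex:
  assumes e: "0 < e" "2 * e\<^sup>2 < 1"
  shows "grad (fex e w) x = fex_grad e w x"
proof -
  consider (outside) "e < \<bar>x$1\<bar>" | (inside) "\<bar>x$1\<bar> < e" | (kink) "\<bar>x$1\<bar> = e"
    by linarith
  then show ?thesis
  proof cases
    case outside
    then show ?thesis
      using grad_eq_has_derivative[OF has_derivative_fex_outside[OF e(1) outside, of w]]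
      by (simp add: fex_grad_def vec_eq_iff forall_2 axis_def)
  next
    case inside
    then show ?thesis
      using grad_eq_has_derivative[OF has_derivative_fex_inside[OF inside, of w]]
      by (simp add: fex_grad_def vec_eq_iff forall_2 axis_def)
  next
    case kink
    then show ?thesis
      using not_differentiable_fex_kink[OF e kink] by (simp add: grad_def fex_grad_def)
  qed
qed

definition mean_sq_partial :: "real \<Rightarrow> real \<Rightarrow> (real^2) set \<Rightarrow> 2 \<Rightarrow> real" where
  "mean_sq_partial e w S i = (\<integral>x. (fex_grad e w x $ i)\<^sup>2 \<partial>uniform_measure lborel S)"

lemma proj_e1_mult_nth: "(proj_e1 *v x) $ 1 = x $ 1"
  by (simp add: matrix_vector_mult_def sum_2)

lemma proj_e2_mult_reflect1: "proj_e2 *v reflect1 x = proj_e2 *v x"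
  by (simp add: vec_eq_iff forall_2 matrix_vector_mult_def sum_2 coord_reflect_axis_nth)

section \<open>Optimal projectors and the two approximation errors\<close>

text \<open>The frequency \<open>w\<close> must be large for \<open>\<partial>\<^sub>2 f\<close> to dominate on the strip (\<open>w_large\<close>),
  yet small against \<open>e\<^sup>-\<^sup>3\<close> for \<open>\<partial>\<^sub>1 f\<close> to dominate on the whole square (\<open>w_small\<close>).\<close>

context
  fixes e w :: real
  assumes e_pos: "0 < e" and e_small: "e \<le> 1/100"
    and w_ge_2: "2 \<le> w" and w_large: "65536/9 < w * e\<^sup>2" and w_small: "w\<^sup>2 * e^6 < (1 - 2 * e) / 2"
begin

lemma two_e_sq_less_1: "2 * e\<^sup>2 < 1"
proof -
  have "e\<^sup>2 \<le> e * 1"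
    using e_pos e_small by (simp add: power2_eq_square mult_left_mono)
  then show ?thesis
    using e_small by simp
qed

lemma box_sets_measure:
  assumes "S \<in> {X2, SetA e, SetB e, SetC e}"
  shows "S \<in> sets borel" "S \<subseteq> X2" "emeasure lborel S \<noteq> 0" "emeasure lborel S \<noteq> \<infinity>"
  using assms e_pos e_small
  by (auto simp: X2_def SetA_def SetB_def SetC_def emeasure_box2 mem_box2)

lemma prob_space_uniform_box: "S \<in> {X2, SetA e, SetB e, SetC e} \<Longrightarrow> prob_space (uniform_measure lborel S)"
  using box_sets_measure by (intro prob_space_uniform_measure)

lemma restr_norm_mu2: "S \<in> {X2, SetA e, SetB e, SetC e} \<Longrightarrow> restr_norm mu2 S = uniform_measure lborel S"
  unfolding restr_norm_def mu2_def using box_sets_measure[of S] box_sets_measure[of X2]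
  by (intro uniform_measure_uniform_measure) auto

lemma abs_fex_le_1: "x \<in> X2 \<Longrightarrow> \<bar>fex e w x\<bar> \<le> 1"
proof -
  assume x: "x \<in> X2"
  have "\<bar>x$1 * (x$1 + e) * (x$1 - e) * cos (w * x$2)\<bar> \<le> 1 * 1 * 1 * 1" if "\<bar>x$1\<bar> < e"
    using that e_pos e_small abs_cos_le_one unfolding abs_mult by (intro mult_mono) auto
  then show ?thesis
    using x e_pos e_small by (auto simp: fex_def mem_X2)
qed

lemma abs_fex_grad_1_le: "\<bar>fex_grad e w x $ 1\<bar> \<le> 1"
proof -
  have "\<bar>(3 * (x$1)\<^sup>2 - e\<^sup>2) * cos (w * x$2)\<bar> \<le> 1 * 1" if "\<bar>x$1\<bar> < e"
  proof -
    have "(x$1)\<^sup>2 \<le> e\<^sup>2"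
      using that by (simp add: abs_le_square_iff[symmetric])
    then have "\<bar>3 * (x$1)\<^sup>2 - e\<^sup>2\<bar> \<le> 1"
      using two_e_sq_less_1 zero_le_power2[of "x$1"] unfolding abs_le_iff by linarith
    then show ?thesis
      unfolding abs_mult using abs_cos_le_one by (intro mult_mono) auto
  qed
  then show ?thesis
    by (simp add: fex_grad_nth)
qed

lemma abs_fex_grad_2_le: "\<bar>fex_grad e w x $ 2\<bar> \<le> w * e^3"
proof -
  have "\<bar>x$1 * ((x$1)\<^sup>2 - e\<^sup>2) * w * sin (w * x$2)\<bar> \<le> e * e\<^sup>2 * w * 1" if "\<bar>x$1\<bar> < e"
  proof -
    have "(x$1)\<^sup>2 \<le> e\<^sup>2"
      using that by (simp add: abs_le_square_iff[symmetric])
    then have "\<bar>(x$1)\<^sup>2 - e\<^sup>2\<bar> \<le> e\<^sup>2"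
      by simp
    then show ?thesis
      unfolding abs_mult using that w_ge_2 abs_sin_le_one by (intro mult_mono) auto
  qed
  then show ?thesis
    using e_pos w_ge_2 by (auto simp: fex_grad_nth power3_eq_cube power2_eq_square algebra_simps)
qed

lemma integrable_uniform_box:
  fixes f :: "real^2 \<Rightarrow> real"
  assumes S: "S \<in> {X2, SetA e, SetB e, SetC e}" and f: "f \<in> borel_measurable borel"
    and bound: "AE x in uniform_measure lborel S. \<bar>f x\<bar> \<le> B"
  shows "integrable (uniform_measure lborel S) f"
proof -
  interpret prob_space "uniform_measure lborel S"
    using prob_space_uniform_box[OF S] .
  show ?thesis
    using f bound by (intro integrable_const_bound[where B = B]) (auto simp: measurable_uniform_measure)
qed

lemma proj_loss_fex:
  assumes S: "S \<in> {X2, SetB e}" and P: "orth_proj 1 P"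
  shows "proj_loss mu2 S (fex e w) P = P$2$2 * mean_sq_partial e w S 1 + P$1$1 * mean_sq_partial e w S 2"
proof -
  let ?M = "uniform_measure lborel S" and ?g1 = "\<lambda>x. fex_grad e w x $ 1" and ?g2 = "\<lambda>x. fex_grad e w x $ 2"
  have box: "S \<in> {X2, SetA e, SetB e, SetC e}"
    using S by auto
  have "(?g1 x)\<^sup>2 \<le> 1\<^sup>2" for x
    using abs_fex_grad_1_le by (rule abs_le_imp_square_le)
  then have int1: "integrable ?M (\<lambda>x. (?g1 x)\<^sup>2)"
    by (intro integrable_uniform_box[OF box, where B = 1]) auto
  have "(?g2 x)\<^sup>2 \<le> (w * e^3)\<^sup>2" for x
    using abs_fex_grad_2_le by (rule abs_le_imp_square_le)
  then have int2: "integrable ?M (\<lambda>x. (?g2 x)\<^sup>2)"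
    by (intro integrable_uniform_box[OF box, where B = "(w * e^3)\<^sup>2"]) auto
  have "\<bar>?g1 x\<bar> * \<bar>?g2 x\<bar> \<le> 1 * (w * e^3)" for x
    using abs_fex_grad_1_le abs_fex_grad_2_le by (rule mult_mono) auto
  then have int12: "integrable ?M (\<lambda>x. ?g1 x * ?g2 x)"
    by (intro integrable_uniform_box[OF box, where B = "w * e^3"]) (auto simp: abs_mult)
  have "reflect1 -` S = S"
    using S by (auto simp: mem_X2 mem_SetB coord_reflect_axis_nth)
  \<comment> \<open>\<open>\<partial>\<^sub>1 f\<close> is even and \<open>\<partial>\<^sub>2 f\<close> odd in \<open>x$1\<close>, so the off-diagonal term of the loss vanishes\<close>
  then have cross: "(\<integral>x. ?g1 x * ?g2 x \<partial>?M) = 0"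
    using box_sets_measure(1)[OF box]
    by (intro integral_uniform_lborel_odd_eq_0) (auto simp: Basis_real2 fex_grad_reflect1)
  have "proj_loss mu2 S (fex e w) P
      = (\<integral>x. P$2$2 * (?g1 x)\<^sup>2 - 2 * P$1$2 * (?g1 x * ?g2 x) + P$1$1 * (?g2 x)\<^sup>2 \<partial>?M)"
    unfolding proj_loss_def restr_norm_mu2[OF box]
    by (simp add: grad_fex[OF e_pos two_e_sq_less_1] orth_proj1_residual_norm[OF P])
  also have "\<dots> = P$2$2 * (\<integral>x. (?g1 x)\<^sup>2 \<partial>?M) - 2 * P$1$2 * (\<integral>x. ?g1 x * ?g2 x \<partial>?M)
      + P$1$1 * (\<integral>x. (?g2 x)\<^sup>2 \<partial>?M)"
    using int1 int2 int12 by simp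
  finally show ?thesis
    by (simp add: cross mean_sq_partial_def)
qed

lemma mean_sq_partial_2_le:
  assumes S: "S \<in> {X2, SetA e, SetB e, SetC e}"
  shows "mean_sq_partial e w S 2 \<le> (w * e^3)\<^sup>2"
proof -
  interpret prob_space "uniform_measure lborel S"
    using prob_space_uniform_box[OF S] .
  have "(fex_grad e w x $ 2)\<^sup>2 \<le> (w * e^3)\<^sup>2" for x
    using abs_fex_grad_2_le by (rule abs_le_imp_square_le)
  then show ?thesis
    unfolding mean_sq_partial_def
    by (intro integral_le_const integrable_uniform_box[OF S, where B = "(w * e^3)\<^sup>2"]) auto
qed

lemma mean_sq_partial_1_X2_ge: "(1 - 2 * e) / 2 \<le> mean_sq_partial e w X2 1"
proof -
  let ?M = "uniform_measure lborel X2"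
  have box: "X2 \<in> {X2, SetA e, SetB e, SetC e}"
    by simp
  interpret prob_space ?M
    using prob_space_uniform_box[OF box] .
  \<comment> \<open>on the left part of \<open>A\<close>, \<open>\<partial>\<^sub>1 f = 1\<close>\<close>
  define R :: "(real^2) set" where "R = cbox (vector [-1, -1]) (vector [-2 * e, 1])"
  have R: "R \<in> sets borel" "X2 \<inter> R = R"
    using e_pos by (auto simp: R_def mem_box2 mem_X2)
  have "1 * measure ?M R \<le> mean_sq_partial e w X2 1"
    unfolding mean_sq_partial_def
  proof (rule measure_mult_le_integral)
    show "integrable ?M (\<lambda>x. (fex_grad e w x $ 1)\<^sup>2)"
      using abs_le_imp_square_le[OF abs_fex_grad_1_le]
      by (intro integrable_uniform_box[OF box, where B = 1]) auto
    show "AE x in ?M. 1 * indicator R x \<le> (fex_grad e w x $ 1)\<^sup>2"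
      using e_pos by (intro AE_I2) (auto simp: R_def mem_box2 fex_grad_nth indicator_def)
  qed (use R in simp)
  moreover have "measure ?M R = (1 - 2 * e) / 2"
    using box_sets_measure[OF box] R e_small by (simp add: R_def X2_def measure_box2)
  ultimately show ?thesis
    by simp
qed

lemma mean_sq_partial_2_less_1_X2: "mean_sq_partial e w X2 2 < mean_sq_partial e w X2 1"
proof -
  have "mean_sq_partial e w X2 2 \<le> (w * e^3)\<^sup>2"
    by (rule mean_sq_partial_2_le) simp
  also have "\<dots> < (1 - 2 * e) / 2"
    using w_small by (simp add: power_mult_distrib flip: power_mult)
  also have "\<dots> \<le> mean_sq_partial e w X2 1"
    by (rule mean_sq_partial_1_X2_ge)
  finally show ?thesis .
qed

lemma mean_sq_partial_1_SetB_le: "mean_sq_partial e w (SetB e) 1 \<le> (2 * e\<^sup>2)\<^sup>2"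
proof -
  let ?M = "uniform_measure lborel (SetB e)"
  have box: "SetB e \<in> {X2, SetA e, SetB e, SetC e}"
    by simp
  interpret prob_space ?M
    using prob_space_uniform_box[OF box] .
  have bound1: "(fex_grad e w x $ 1)\<^sup>2 \<le> (2 * e\<^sup>2)\<^sup>2" if "x \<in> SetB e" for x
  proof (cases "\<bar>x$1\<bar> < e")
    case True
    then have "(x$1)\<^sup>2 \<le> e\<^sup>2"
      by (simp add: abs_le_square_iff[symmetric])
    then have "\<bar>3 * (x$1)\<^sup>2 - e\<^sup>2\<bar> \<le> 2 * e\<^sup>2"
      using zero_le_power2[of "x$1"] unfolding abs_le_iff by linarith
    then have "\<bar>(3 * (x$1)\<^sup>2 - e\<^sup>2) * cos (w * x$2)\<bar> \<le> 2 * e\<^sup>2 * 1"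
      unfolding abs_mult using abs_cos_le_one by (intro mult_mono) auto
    then have "((3 * (x$1)\<^sup>2 - e\<^sup>2) * cos (w * x$2))\<^sup>2 \<le> (2 * e\<^sup>2 * 1)\<^sup>2"
      by (rule abs_le_imp_square_le)
    with True show ?thesis
      by (simp add: fex_grad_nth)
  qed (use that in \<open>auto simp: fex_grad_nth mem_SetB\<close>)
  show ?thesis
    unfolding mean_sq_partial_def using box_sets_measure(1)[OF box] bound1
    by (intro integral_le_const integrable_uniform_box[OF box, where B = "(2 * e\<^sup>2)\<^sup>2"] AE_uniform_measureI)
      (auto simp: power2_le_iff_abs_le)
qed

lemma fex_grad_2_sq_ge:
  fixes x :: "real^2"
  assumes "x \<in> cbox (vector [e/4, 1/w]) (vector [e/2, 2/w])"
  shows "(3 * w * e^3 / 32)\<^sup>2 \<le> (fex_grad e w x $ 2)\<^sup>2"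
proof -
  have x1: "e/4 \<le> x$1" "x$1 \<le> e/2" and x2: "1 \<le> w * x$2" "w * x$2 \<le> 2"
    using assms w_ge_2 by (auto simp: mem_box2 field_simps)
  have "(x$1)\<^sup>2 \<le> (e/2)\<^sup>2"
    using x1 e_pos by (intro power_mono) auto
  then have "3 * e\<^sup>2 / 4 \<le> \<bar>(x$1)\<^sup>2 - e\<^sup>2\<bar>"
    by (auto simp: power_divide abs_if)
  moreover have "1/2 \<le> \<bar>sin (w * x$2)\<bar>"
    using sin_ge_half[OF x2] by simp
  moreover have "e/4 \<le> \<bar>x$1\<bar>"
    using x1 by simp
  ultimately have "(e/4) * (3 * e\<^sup>2 / 4) * w * (1/2) \<le> \<bar>x$1\<bar> * \<bar>(x$1)\<^sup>2 - e\<^sup>2\<bar> * w * \<bar>sin (w * x$2)\<bar>"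
    using e_pos w_ge_2 by (intro mult_mono) auto
  moreover have "\<bar>x$1\<bar> < e"
    using x1 e_pos by simp
  ultimately have "3 * w * e^3 / 32 \<le> \<bar>fex_grad e w x $ 2\<bar>"
    using w_ge_2 by (simp add: fex_grad_nth abs_mult power3_eq_cube power2_eq_square)
  then show ?thesis
    using power_mono[of "3 * w * e^3 / 32" "\<bar>fex_grad e w x $ 2\<bar>" 2] e_pos w_ge_2 by simp
qed

lemma rectangle_subset_SetB: "cbox (vector [e/4, 1/w]) (vector [e/2, 2/w]) \<subseteq> SetB e"
proof
  fix x :: "real^2" assume "x \<in> cbox (vector [e/4, 1/w]) (vector [e/2, 2/w])"
  then have "e/4 \<le> x$1" "x$1 \<le> e/2" "1/w \<le> x$2" "x$2 \<le> 2/w"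
    by (simp_all add: mem_box2)
  moreover have "2/w \<le> 1" "0 < 1/w"
    using w_ge_2 by simp_all
  ultimately have "\<bar>x$1\<bar> \<le> e" "\<bar>x$2\<bar> \<le> 1"
    using e_pos unfolding abs_le_iff by linarith+
  then show "x \<in> SetB e"
    by (simp add: mem_SetB)
qed

lemma mean_sq_partial_2_SetB_ge: "9 * w * e^6 / 16384 \<le> mean_sq_partial e w (SetB e) 2"
proof -
  let ?M = "uniform_measure lborel (SetB e)"
  have box: "SetB e \<in> {X2, SetA e, SetB e, SetC e}"
    by simp
  interpret prob_space ?M
    using prob_space_uniform_box[OF box] .
  \<comment> \<open>a rectangle on which the oscillating factor \<open>sin (w x\<^sub>2)\<close> stays above \<open>1/2\<close>\<close>
  define R :: "(real^2) set" where "R = cbox (vector [e/4, 1/w]) (vector [e/2, 2/w])"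
  have R: "R \<in> sets borel" "SetB e \<inter> R = R"
    using rectangle_subset_SetB by (auto simp: R_def)
  have "(3 * w * e^3 / 32)\<^sup>2 * measure ?M R \<le> mean_sq_partial e w (SetB e) 2"
    unfolding mean_sq_partial_def
  proof (rule measure_mult_le_integral)
    show "integrable ?M (\<lambda>x. (fex_grad e w x $ 2)\<^sup>2)"
      using abs_le_imp_square_le[OF abs_fex_grad_2_le]
      by (intro integrable_uniform_box[OF box, where B = "(w * e^3)\<^sup>2"]) auto
    show "AE x in ?M. (3 * w * e^3 / 32)\<^sup>2 * indicator R x \<le> (fex_grad e w x $ 2)\<^sup>2"
      using fex_grad_2_sq_ge by (intro AE_I2) (auto simp: R_def indicator_def)
  qed (use R in simp)
  moreover have "measure ?M R = 1 / (16 * w)"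
    using box_sets_measure[OF box] R e_pos w_ge_2
    by (simp add: R_def SetB_def measure_box2 field_simps)
  ultimately show ?thesis
    using w_ge_2 by (simp add: power2_eq_square field_simps)
qed

lemma mean_sq_partial_1_less_2_SetB: "mean_sq_partial e w (SetB e) 1 < mean_sq_partial e w (SetB e) 2"
proof -
  have "mean_sq_partial e w (SetB e) 1 \<le> (2 * e\<^sup>2)\<^sup>2"
    by (rule mean_sq_partial_1_SetB_le)
  also have "\<dots> < 9 * w * e^6 / 16384"
  proof -
    have "9 * e^4 * (65536 / 9) < 9 * e^4 * (w * e\<^sup>2)"
      using w_large e_pos by (intro mult_strict_left_mono) auto
    moreover have "e^4 * e\<^sup>2 = e^6"
      by (simp flip: power_add)
    ultimately show ?thesis
      by (simp add: power_mult_distrib algebra_simps)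
  qed
  also have "\<dots> \<le> mean_sq_partial e w (SetB e) 2"
    by (rule mean_sq_partial_2_SetB_ge)
  finally show ?thesis .
qed

lemma opt_proj_X2: "{P. opt_proj mu2 X2 1 (fex e w) P} = {proj_e1}"
  using orth_proj1_minimisers(1)[OF proj_loss_fex mean_sq_partial_2_less_1_X2]
  by (simp add: opt_proj_def)

lemma opt_proj_SetB: "{P. opt_proj mu2 (SetB e) 1 (fex e w) P} = {proj_e2}"
  using orth_proj1_minimisers(2)[OF proj_loss_fex mean_sq_partial_1_less_2_SetB]
  by (simp add: opt_proj_def)

lemma opt_proj_SetA_SetC:
  assumes S: "S \<in> {SetA e, SetC e}"
  shows "opt_proj mu2 S 1 (fex e w) proj_e1"
proof -
  have box: "S \<in> {X2, SetA e, SetB e, SetC e}"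
    using S by auto
  \<comment> \<open>\<open>f\<close> depends only on \<open>x$1\<close> on \<open>A\<close> and \<open>C\<close>, so \<open>proj_e1\<close> has zero loss there\<close>
  have "AE x in uniform_measure lborel S. (norm ((mat 1 - proj_e1) *v grad (fex e w) x))\<^sup>2 = 0"
    using box_sets_measure(1)[OF box] S e_pos
    by (intro AE_uniform_measureI AE_I2)
      (auto simp: grad_fex[OF e_pos two_e_sq_less_1] orth_proj1_residual_norm[OF orth_proj_proj_e1]
        fex_grad_nth mem_SetA mem_SetC)
  then have "proj_loss mu2 S (fex e w) proj_e1 = 0"
    unfolding proj_loss_def restr_norm_mu2[OF box] by (simp add: integral_eq_zero_AE)
  moreover have "0 \<le> proj_loss mu2 S (fex e w) Q" for Q
    unfolding proj_loss_def by simp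
  ultimately show ?thesis
    unfolding opt_proj_def using orth_proj_proj_e1 by (intro conjI allI impI) simp_all
qed

lemma AE_abs_fex_le_1:
  "S \<in> {X2, SetA e, SetB e, SetC e} \<Longrightarrow> AE x in uniform_measure lborel S. \<bar>fex e w x\<bar> \<le> 1"
  using box_sets_measure(1,2) abs_fex_le_1 by (intro AE_uniform_measureI AE_I2) auto

lemma AE_abs_cond_exp_fex_le_1:
  assumes S: "S \<in> {X2, SetA e, SetB e, SetC e}"
  shows "AE x in uniform_measure lborel S. \<bar>cond_exp_proj (uniform_measure lborel S) (fex e w) P x\<bar> \<le> 1"
proof -
  let ?M = "uniform_measure lborel S"
  interpret prob_space ?M
    using prob_space_uniform_box[OF S] .
  interpret sigma_finite_subalgebra ?M "proj_sigma ?M P"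
    by (intro sigma_finite_subalgebra_proj_sigma finite_measure_axioms) simp
  have "integrable ?M (fex e w)"
    using AE_abs_fex_le_1[OF S] by (intro integrable_uniform_box[OF S]) auto
  then show ?thesis
    unfolding cond_exp_proj_def using AE_abs_fex_le_1[OF S] by (rule real_cond_exp_abs_le)
qed

lemma cond_exp_fex_SetB_proj_e2_eq_0:
  "AE x in uniform_measure lborel (SetB e). cond_exp_proj (uniform_measure lborel (SetB e)) (fex e w) proj_e2 x = 0"
proof -
  let ?M = "uniform_measure lborel (SetB e)"
  have box: "SetB e \<in> {X2, SetA e, SetB e, SetC e}"
    by simp
  interpret prob_space ?M
    using prob_space_uniform_box[OF box] .
  interpret sigma_finite_subalgebra ?M "proj_sigma ?M proj_e2"
    by (intro sigma_finite_subalgebra_proj_sigma finite_measure_axioms) simp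
  have "reflect1 -` SetB e = SetB e"
    by (auto simp: mem_SetB coord_reflect_axis_nth)
  moreover have "axis 1 1 \<in> (Basis :: (real^2) set)"
    by (simp add: Basis_real2)
  ultimately have reflect: "reflect1 \<in> ?M \<rightarrow>\<^sub>M ?M" "distr ?M ?M reflect1 = ?M"
    using uniform_measure_lborel_coord_reflect[OF _ box_sets_measure(1)[OF box]] by blast+
  \<comment> \<open>the reflection preserves the measure and every event generated by \<open>x$2\<close>, but flips the sign of \<open>f\<close>\<close>
  show ?thesis
    unfolding cond_exp_proj_def
  proof (rule real_cond_exp_odd_eq_0)
    show "reflect1 \<in> ?M \<rightarrow>\<^sub>M ?M" "distr ?M ?M reflect1 = ?M"
      by (fact reflect)+
    show "reflect1 -` A \<inter> space ?M = A" if "A \<in> sets (proj_sigma ?M proj_e2)" for A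
    proof -
      have "A \<in> {(\<lambda>x. proj_e2 *v x) -` T | T. T \<in> sets borel}"
        using that sets_proj_sigma[of ?M proj_e2] by simp
      then obtain T where "A = (\<lambda>x. proj_e2 *v x) -` T"
        by blast
      then show ?thesis
        by (auto simp: proj_e2_mult_reflect1)
    qed
    show "integrable ?M (fex e w)"
      using AE_abs_fex_le_1[OF box] by (intro integrable_uniform_box[OF box]) auto
    show "fex e w (reflect1 x) = - fex e w x" for x
      using e_pos by (rule fex_reflect1)
  qed
qed

lemma cond_exp_proj_e1_error_le_strip:
  "(\<integral>x. (fex e w x - cond_exp_proj mu2 (fex e w) proj_e1 x)\<^sup>2 \<partial>mu2)
    \<le> (\<integral>x. (if \<bar>x$1\<bar> < e then (fex e w x)\<^sup>2 else 0) \<partial>mu2)"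
proof -
  let ?M = "uniform_measure lborel X2"
  have box: "X2 \<in> {X2, SetA e, SetB e, SetC e}"
    by simp
  interpret prob_space ?M
    using prob_space_uniform_box[OF box] .
  interpret sigma_finite_subalgebra ?M "proj_sigma ?M proj_e1"
    by (intro sigma_finite_subalgebra_proj_sigma finite_measure_axioms) simp
  \<comment> \<open>a competitor that agrees with \<open>f\<close> off the strip \<open>\<bar>x$1\<bar> < e\<close> and depends only on \<open>x$1\<close>\<close>
  define g where "g t = (if t \<le> -e then t + e else if t < e then 0 else t - e)" for t
  have "(\<lambda>x. g ((proj_e1 *v x) $ 1)) \<in> borel_measurable (proj_sigma ?M proj_e1)"
    by (rule measurable_proj_sigma) (simp add: g_def)
  then have g_meas: "(\<lambda>x. g (x $ 1)) \<in> borel_measurable (proj_sigma ?M proj_e1)"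
    by (simp add: proj_e1_mult_nth)
  have "AE x in ?M. \<bar>g (x $ 1)\<bar> \<le> 1"
    using box_sets_measure(1)[OF box] e_pos by (intro AE_uniform_measureI AE_I2) (auto simp: g_def mem_X2)
  then have "(\<integral>x. (fex e w x - real_cond_exp ?M (proj_sigma ?M proj_e1) (fex e w) x)\<^sup>2 \<partial>?M)
      \<le> (\<integral>x. (fex e w x - g (x $ 1))\<^sup>2 \<partial>?M)"
    using AE_abs_fex_le_1[OF box] g_meas
    by (intro real_cond_exp_L2_optimal finite_measure_axioms) (auto simp: measurable_uniform_measure)
  also have "(\<lambda>x. (fex e w x - g (x $ 1))\<^sup>2) = (\<lambda>x. if \<bar>x$1\<bar> < e then (fex e w x)\<^sup>2 else 0)"
    using e_pos by (auto simp: fun_eq_iff fex_def g_def)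
  finally show ?thesis
    by (simp add: cond_exp_proj_def mu2_def)
qed

lemma RAS_fex_eq:
  "RAS e (fex e w) PA PB PC x =
    (if x$1 \<le> -e then cond_exp_proj (uniform_measure lborel (SetA e)) (fex e w) PA x
     else if x$1 < e then cond_exp_proj (uniform_measure lborel (SetB e)) (fex e w) PB x
     else cond_exp_proj (uniform_measure lborel (SetC e)) (fex e w) PC x)"
  by (simp add: RAS_def restr_norm_mu2)

lemma AE_in_X2: "AE x in mu2. x \<in> X2"
  unfolding mu2_def using box_sets_measure(1)[of X2] by (intro AE_uniform_measureI AE_I2) auto

lemma AE_abs_RAS_fex_le_1: "AE x in mu2. \<bar>RAS e (fex e w) PA PB PC x\<bar> \<le> 1"
proof -
  have "AE x in mu2. x \<in> S \<longrightarrow> \<bar>cond_exp_proj (uniform_measure lborel S) (fex e w) P x\<bar> \<le> 1"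
    if "S \<in> {SetA e, SetB e, SetC e}" for S P
    unfolding mu2_def using that box_sets_measure[of S] box_sets_measure(1)[of X2]
    by (intro AE_uniform_measure_subset AE_abs_cond_exp_fex_le_1) auto
  then have "AE x in mu2. x \<in> SetA e \<longrightarrow> \<bar>cond_exp_proj (uniform_measure lborel (SetA e)) (fex e w) PA x\<bar> \<le> 1"
    "AE x in mu2. x \<in> SetB e \<longrightarrow> \<bar>cond_exp_proj (uniform_measure lborel (SetB e)) (fex e w) PB x\<bar> \<le> 1"
    "AE x in mu2. x \<in> SetC e \<longrightarrow> \<bar>cond_exp_proj (uniform_measure lborel (SetC e)) (fex e w) PC x\<bar> \<le> 1"
    by simp_all
  then show ?thesis
    using AE_in_X2 by eventually_elim (auto simp: RAS_fex_eq mem_X2 mem_SetA mem_SetB mem_SetC)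
qed

lemma strip_le_RAS_error:
  "(\<integral>x. (if \<bar>x$1\<bar> < e then (fex e w x)\<^sup>2 else 0) \<partial>mu2)
    \<le> (\<integral>x. (fex e w x - RAS e (fex e w) PA proj_e2 PC x)\<^sup>2 \<partial>mu2)"
proof -
  let ?R = "RAS e (fex e w) PA proj_e2 PC"
  have box: "X2 \<in> {X2, SetA e, SetB e, SetC e}"
    by simp
  have "AE x in mu2. (fex e w x - ?R x)\<^sup>2 \<le> 2\<^sup>2"
    using AE_abs_fex_le_1[OF box] AE_abs_RAS_fex_le_1[of PA proj_e2 PC] unfolding mu2_def
  proof eventually_elim
    case (elim x)
    then have "\<bar>fex e w x - ?R x\<bar> \<le> 2"
      using abs_triangle_ineq4[of "fex e w x" "?R x"] by linarith
    then show ?case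
      by (rule abs_le_imp_square_le)
  qed
  moreover have "(\<lambda>x. (fex e w x - ?R x)\<^sup>2) \<in> borel_measurable borel"
    unfolding RAS_fex_eq by measurable
  ultimately have "integrable mu2 (\<lambda>x. (fex e w x - ?R x)\<^sup>2)"
    unfolding mu2_def by (intro integrable_uniform_box[OF box]) auto
  moreover have "AE x in mu2. x \<in> SetB e \<longrightarrow> cond_exp_proj (uniform_measure lborel (SetB e)) (fex e w) proj_e2 x = 0"
    unfolding mu2_def using box_sets_measure[of "SetB e"] box_sets_measure(1)[OF box]
    by (intro AE_uniform_measure_subset cond_exp_fex_SetB_proj_e2_eq_0) auto
  then have "AE x in mu2. (if \<bar>x$1\<bar> < e then (fex e w x)\<^sup>2 else 0) \<le> (fex e w x - ?R x)\<^sup>2"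
    using AE_in_X2 by eventually_elim (auto simp: RAS_fex_eq mem_X2 mem_SetB)
  ultimately show ?thesis
    by (intro integral_mono_AE') auto
qed

lemma local_ridge_error_ge:
  assumes "opt_proj mu2 (SetB e) 1 (fex e w) PB" and "opt_proj mu2 X2 1 (fex e w) PX"
  shows "(\<integral>x. (fex e w x - cond_exp_proj mu2 (fex e w) PX x)\<^sup>2 \<partial>mu2)
    \<le> (\<integral>x. (fex e w x - RAS e (fex e w) PA PB PC x)\<^sup>2 \<partial>mu2)"
proof -
  have "PB \<in> {P. opt_proj mu2 (SetB e) 1 (fex e w) P}" "PX \<in> {P. opt_proj mu2 X2 1 (fex e w) P}"
    using assms by simp_all
  then have "PB = proj_e2" "PX = proj_e1"
    unfolding opt_proj_SetB opt_proj_X2 by simp_all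
  then show ?thesis
    using order_trans[OF cond_exp_proj_e1_error_le_strip strip_le_RAS_error] by simp
qed

end

theorem corollary1:
  shows "\<exists>\<epsilon> \<omega>::real. 0 < \<epsilon> \<and> \<epsilon> < 1 \<and> 0 < \<omega> \<and>
    (\<exists>P. opt_proj mu2 X2 1 (fex \<epsilon> \<omega>) P) \<and>
    (\<exists>P. opt_proj mu2 (SetA \<epsilon>) 1 (fex \<epsilon> \<omega>) P) \<and>
    (\<exists>P. opt_proj mu2 (SetB \<epsilon>) 1 (fex \<epsilon> \<omega>) P) \<and>
    (\<exists>P. opt_proj mu2 (SetC \<epsilon>) 1 (fex \<epsilon> \<omega>) P) \<and>
    (\<forall>PA PB PC PX.
       opt_proj mu2 (SetA \<epsilon>) 1 (fex \<epsilon> \<omega>) PA \<longrightarrow>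
       opt_proj mu2 (SetB \<epsilon>) 1 (fex \<epsilon> \<omega>) PB \<longrightarrow>
       opt_proj mu2 (SetC \<epsilon>) 1 (fex \<epsilon> \<omega>) PC \<longrightarrow>
       opt_proj mu2 X2 1 (fex \<epsilon> \<omega>) PX \<longrightarrow>
       (\<integral>x. (fex \<epsilon> \<omega> x - RAS \<epsilon> (fex \<epsilon> \<omega>) PA PB PC x)\<^sup>2 \<partial>mu2)
         \<ge> (\<integral>x. (fex \<epsilon> \<omega> x - cond_exp_proj mu2 (fex \<epsilon> \<omega>) PX x)\<^sup>2 \<partial>mu2))"
proof -
  define e w :: real where "e = 1/100000" and "w = 80000000000000"
  have params: "0 < e" "e \<le> 1/100" "2 \<le> w" "65536/9 < w * e\<^sup>2" "w\<^sup>2 * e^6 < (1 - 2 * e) / 2"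
    by (simp_all add: e_def w_def power_divide)
  have "opt_proj mu2 X2 1 (fex e w) proj_e1" "opt_proj mu2 (SetB e) 1 (fex e w) proj_e2"
    using opt_proj_X2[OF params] opt_proj_SetB[OF params] by auto
  moreover have "opt_proj mu2 (SetA e) 1 (fex e w) proj_e1" "opt_proj mu2 (SetC e) 1 (fex e w) proj_e1"
    using opt_proj_SetA_SetC[OF params] by simp_all
  moreover have "0 < e" "e < 1" "0 < w"
    by (simp_all add: e_def w_def)
  ultimately show ?thesis
    using local_ridge_error_ge[OF params] by (intro exI[of _ e] exI[of _ w]) auto
qed

end
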